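(* Let $A$ be a simple infinite-dimensional unital $C^*$-algebra which is not purely infinite, and let $x\in A_+\setminus\{0\}$. Then for every $\varepsilon>0$ there is $y\in (\overline{xAx})_+\setminus\{0\}$ such that whenever $f\in A$ satisfies $0\le f\le 1$ and $1-f\precsim y$, one has $\|f\|>1-\varepsilon$.
   Context: For positive elements $a,b$ of a $C^*$-algebra $A$, $a\precsim b$ (Cuntz subequivalence) means there is a sequence $(v_n)$ in $A$ with $\|a-v_nbv_n^*\|\to 0$. A simple unital $C^*$-algebra $A$ is purely infinite if it is infinite-dimensional and for every non-zero $a\in A$ there are $x,y\in A$ with $xay=1$. $\overline{xAx}$ denotes the hereditary subalgebra (norm closure of $xAx$). *)

theory Defs
  imports "HOL-Analysis.Analysis"
begin

class cstar_algebra_1 = real_normed_algebra_1 + banach +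
  fixes scaleC :: "complex \<Rightarrow> 'a \<Rightarrow> 'a"
    and cstar :: "'a \<Rightarrow> 'a"
  assumes scaleC_add_right: "scaleC c (x + y) = scaleC c x + scaleC c y"
    and scaleC_add_left: "scaleC (c + d) x = scaleC c x + scaleC d x"
    and scaleC_scaleC: "scaleC c (scaleC d x) = scaleC (c * d) x"
    and scaleC_of_real: "scaleC (complex_of_real r) x = scaleR r x"
    and norm_scaleC: "norm (scaleC c x) = cmod c * norm x"
    and mult_scaleC_left: "scaleC c x * y = scaleC c (x * y)"
    and mult_scaleC_right: "x * scaleC c y = scaleC c (x * y)"
    and cstar_add: "cstar (x + y) = cstar x + cstar y"
    and cstar_scaleC: "cstar (scaleC c x) = scaleC (cnj c) (cstar x)"
    and cstar_mult: "cstar (x * y) = cstar y * cstar x"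
    and cstar_cstar: "cstar (cstar x) = x"
    and cstar_identity: "norm (cstar x * x) = (norm x)\<^sup>2"

definition invertible_elem :: "'a::cstar_algebra_1 \<Rightarrow> bool" where
  "invertible_elem a \<longleftrightarrow> (\<exists>b. a * b = 1 \<and> b * a = 1)"

definition cspectrum :: "'a::cstar_algebra_1 \<Rightarrow> complex set" where
  "cspectrum a = {z. \<not> invertible_elem (a - scaleC z 1)}"

definition positive :: "'a::cstar_algebra_1 \<Rightarrow> bool" where
  "positive a \<longleftrightarrow> cstar a = a \<and> (\<forall>z\<in>cspectrum a. Im z = 0 \<and> Re z \<ge> 0)"

definition cuntz_le :: "'a::cstar_algebra_1 \<Rightarrow> 'a \<Rightarrow> bool" where
  "cuntz_le a b \<longleftrightarrow> (\<exists>v::nat \<Rightarrow> 'a. (\<lambda>n. norm (a - v n * b * cstar (v n))) \<longlonglongrightarrow> 0)"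

definition closed_ideal :: "'a::cstar_algebra_1 set \<Rightarrow> bool" where
  "closed_ideal I \<longleftrightarrow> closed I \<and> 0 \<in> I \<and>
     (\<forall>x\<in>I. \<forall>y\<in>I. x + y \<in> I) \<and> (\<forall>c. \<forall>x\<in>I. scaleC c x \<in> I) \<and>
     (\<forall>x\<in>I. \<forall>a. a * x \<in> I \<and> x * a \<in> I)"

definition simple_alg :: "'a::cstar_algebra_1 itself \<Rightarrow> bool" where
  "simple_alg _ \<longleftrightarrow> (\<forall>I::'a set. closed_ideal I \<longrightarrow> I = {0} \<or> I = UNIV)"

definition finite_dim_alg :: "'a::cstar_algebra_1 itself \<Rightarrow> bool" where
  "finite_dim_alg _ \<longleftrightarrow> (\<exists>S::'a set. finite S \<and>
      (\<forall>x::'a. \<exists>c. x = (\<Sum>s\<in>S. scaleC (c s) s)))"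

definition purely_infinite :: "'a::cstar_algebra_1 itself \<Rightarrow> bool" where
  "purely_infinite T \<longleftrightarrow> \<not> finite_dim_alg T \<and>
     (\<forall>a::'a. a \<noteq> 0 \<longrightarrow> (\<exists>x y. x * a * y = 1))"

definition hered :: "'a::cstar_algebra_1 \<Rightarrow> 'a set" where
  "hered x = closure {x * a * x | a. True}"

end

theory Submission
  imports Defs
begin

text \<open>Since \<open>A\<close> is not purely infinite, some \<open>a \<noteq> 0\<close> satisfies \<open>u a w \<noteq> 1\<close> for all \<open>u, w\<close>.
By simplicity \<open>z = x c a \<noteq> 0\<close> for some \<open>c\<close>, and \<open>y = (z z\<^sup>*)\<^sup>2\<close> is a non-zero positive
element of \<open>xAx\<close>. If \<open>\<parallel>f\<parallel> < 1\<close>, then \<open>1 - f\<close> is invertible; invertible elements form an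
open set, so \<open>1 - f \<precsim> y\<close> makes some \<open>v y v\<^sup>*\<close> invertible, and then \<open>a\<close> divides \<open>1\<close> on both
sides, a contradiction. Hence in fact \<open>\<parallel>f\<parallel> \<ge> 1\<close>.\<close>

lemma exists_inverse_one_minus:
  fixes d :: "'a::{real_normed_algebra_1,banach}"
  assumes "norm d < 1"
  shows "\<exists>s. (1 - d) * s = 1 \<and> s * (1 - d) = 1"
proof -
  have sm: "summable (\<lambda>n. d ^ n)" by (rule complete_algebra_summable_geometric[OF assms])
  define S where "S = (\<Sum>n. d ^ n)"
  have tail: "(\<Sum>n. d ^ Suc n) = S - 1"
    using suminf_split_head[OF sm] by (simp add: S_def)
  have "d * S = S - 1"
    using suminf_mult[OF sm, of d] tail by (simp add: S_def)
  moreover have "S * d = S - 1"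
    using suminf_mult2[OF sm, of d] tail by (simp add: S_def power_commutes)
  ultimately have "(1 - d) * S = 1" "S * (1 - d) = 1" by (simp_all add: algebra_simps)
  then show ?thesis by blast
qed

lemma scaleC_one [simp]: "scaleC 1 (x::'a::cstar_algebra_1) = x"
  using scaleC_of_real[of 1 x] by simp

lemma scaleC_zero_left [simp]: "scaleC 0 (x::'a::cstar_algebra_1) = 0"
  using scaleC_of_real[of 0 x] by simp

lemma scaleC_zero_right [simp]: "scaleC c (0::'a::cstar_algebra_1) = 0"
  using scaleC_add_right[of c 0 0] by simp

lemma scaleC_minus_left: "scaleC (- c) (x::'a::cstar_algebra_1) = - scaleC c x"
  using scaleC_add_left[of c "-c" x] by (simp add: eq_neg_iff_add_eq_0 add.commute)

lemma scaleC_minus_right: "scaleC c (- (x::'a::cstar_algebra_1)) = - scaleC c x"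
  using scaleC_add_right[of c x "-x"] by (simp add: eq_neg_iff_add_eq_0 add.commute)

lemma scaleC_diff_right: "scaleC c ((x::'a::cstar_algebra_1) - y) = scaleC c x - scaleC c y"
  using scaleC_add_right[of c x "-y"] by (simp add: scaleC_minus_right)

lemma scaleC_one_mult: "scaleC c 1 * (y::'a::cstar_algebra_1) = scaleC c y"
  by (simp add: mult_scaleC_left)

lemma mult_scaleC_one: "(y::'a::cstar_algebra_1) * scaleC c 1 = scaleC c y"
  by (simp add: mult_scaleC_right)

lemma cstar_zero [simp]: "cstar (0::'a::cstar_algebra_1) = 0"
  using cstar_add[of 0 0] by simp

lemma cstar_one [simp]: "cstar (1::'a::cstar_algebra_1) = 1"
  by (metis cstar_cstar cstar_mult mult_1_left)

lemma cstar_eq_0_iff [simp]: "cstar (x::'a::cstar_algebra_1) = 0 \<longleftrightarrow> x = 0"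
  by (metis cstar_cstar cstar_zero)

lemma invertible_elemI:
  fixes w :: "'a::cstar_algebra_1"
  assumes "l * w = 1" and "w * r = 1"
  shows "invertible_elem w"
proof -
  have "l = r" by (metis assms mult.assoc mult_1_left mult_1_right)
  then show ?thesis using assms unfolding invertible_elem_def by blast
qed

lemma invertible_elem_one_minus:
  fixes d :: "'a::cstar_algebra_1"
  assumes "norm d < 1"
  shows "invertible_elem (1 - d)"
  using exists_inverse_one_minus[OF assms] unfolding invertible_elem_def by blast

lemma invertible_elem_mult:
  fixes u w :: "'a::cstar_algebra_1"
  assumes "invertible_elem u" "invertible_elem w"
  shows "invertible_elem (u * w)"
proof -
  obtain u' where "u * u' = 1" "u' * u = 1" using assms(1) unfolding invertible_elem_def by blast
  moreover obtain w' where "w * w' = 1" "w' * w = 1" using assms(2) unfolding invertible_elem_def by blast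
  ultimately have "(w' * u') * (u * w) = 1" "u * w * (w' * u') = 1"
    by (metis mult.assoc mult_1_left)+
  then show ?thesis by (rule invertible_elemI)
qed

lemma invertible_elem_scaleC:
  fixes u :: "'a::cstar_algebra_1"
  assumes "invertible_elem u" "c \<noteq> 0"
  shows "invertible_elem (scaleC c u)"
proof -
  obtain u' where "u * u' = 1" "u' * u = 1" using assms(1) unfolding invertible_elem_def by blast
  with assms(2) have "scaleC (1/c) u' * scaleC c u = 1" "scaleC c u * scaleC (1/c) u' = 1"
    by (simp_all add: mult_scaleC_left mult_scaleC_right scaleC_scaleC)
  then show ?thesis by (rule invertible_elemI)
qed

lemma invertible_elem_near_invertible:
  fixes u w :: "'a::cstar_algebra_1"
  assumes "u * g = 1" "g * u = 1" and "norm g * norm (u - w) < 1"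
  shows "invertible_elem w"
proof -
  have "norm (g * (u - w)) < 1" "norm ((u - w) * g) < 1"
    using assms(3) norm_mult_ineq[of g "u - w"] norm_mult_ineq[of "u - w" g]
    by (simp_all add: mult.commute)
  then have "invertible_elem (1 - g * (u - w))" "invertible_elem (1 - (u - w) * g)"
    by (simp_all add: invertible_elem_one_minus)
  moreover have "1 - g * (u - w) = g * w" "1 - (u - w) * g = w * g"
    using assms(1,2) by (simp_all add: algebra_simps)
  ultimately obtain l r where "l * (g * w) = 1" "(w * g) * r = 1"
    unfolding invertible_elem_def by auto
  then have "(l * g) * w = 1" "w * (g * r) = 1" by (simp_all add: mult.assoc)
  then show ?thesis by (rule invertible_elemI)
qed

lemma norm_le_of_mem_cspectrum:
  fixes a :: "'a::cstar_algebra_1"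
  assumes "z \<in> cspectrum a"
  shows "cmod z \<le> norm a"
proof (rule ccontr)
  assume "\<not> cmod z \<le> norm a"
  then have lt: "norm a < cmod z" by simp
  then have z0: "z \<noteq> 0" by auto
  define d where "d = scaleC (1/z) a"
  have "norm d = norm a / cmod z" by (simp add: d_def norm_scaleC norm_divide)
  also have "\<dots> < 1" using lt z0 by simp
  finally have "invertible_elem (scaleC (-z) (1 - d))"
    using z0 by (intro invertible_elem_scaleC invertible_elem_one_minus) auto
  moreover have "scaleC (-z) (1 - d) = a - scaleC z 1"
    using z0 by (simp add: d_def scaleC_diff_right scaleC_scaleC scaleC_minus_left)
  ultimately show False using assms unfolding cspectrum_def by simp
qed

lemma norm_selfadjoint_plus_imaginary:
  fixes h :: "'a::cstar_algebra_1"
  assumes "cstar h = h"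
  shows "(norm (h + scaleC (\<i> * of_real t) 1))\<^sup>2 \<le> (norm h)\<^sup>2 + t\<^sup>2"
proof -
  define k where "k = h + scaleC (\<i> * of_real t) 1"
  have "cstar k * k = (h + scaleC (- (\<i> * of_real t)) 1) * (h + scaleC (\<i> * of_real t) 1)"
    by (simp add: k_def cstar_add cstar_scaleC assms)
  also have "\<dots> = h * h + h * scaleC (\<i> * of_real t) 1 + scaleC (- (\<i> * of_real t)) 1 * h
      + scaleC (- (\<i> * of_real t)) 1 * scaleC (\<i> * of_real t) 1"
    by (simp add: distrib_left distrib_right add.assoc)
  also have "\<dots> = h * h + (scaleC (\<i> * of_real t) h + scaleC (- (\<i> * of_real t)) h)
      + scaleC ((\<i> * of_real t) * - (\<i> * of_real t)) 1"
    by (simp only: scaleC_one_mult mult_scaleC_one scaleC_scaleC add.assoc)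
  also have "scaleC (\<i> * of_real t) h + scaleC (- (\<i> * of_real t)) h = 0"
    by (simp add: scaleC_minus_left)
  also have "(\<i> * of_real t) * - (\<i> * of_real t) = complex_of_real (t\<^sup>2)"
    by (simp add: power2_eq_square algebra_simps)
  finally have "cstar k * k = h * h + scaleR (t\<^sup>2) 1"
    by (simp only: scaleC_of_real add_0_right)
  then have "norm (cstar k * k) \<le> norm (h * h) + t\<^sup>2"
    by (metis norm_triangle_ineq norm_scaleR norm_one mult_1_right abs_of_nonneg zero_le_power2)
  also have "norm (h * h) \<le> (norm h)\<^sup>2" by (simp add: power2_eq_square norm_mult_ineq)
  finally show ?thesis by (simp add: cstar_identity k_def)
qed

text \<open>For real \<open>t\<close>, \<open>z + i t\<close> lies in the spectrum of \<open>h + i t\<close>, and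
\<open>|z + i t|\<^sup>2 = |z|\<^sup>2 + 2 t Im z + t\<^sup>2\<close> exceeds \<open>\<parallel>h\<parallel>\<^sup>2 + t\<^sup>2\<close> once \<open>t Im z\<close> is large.\<close>

lemma Im_eq_0_of_mem_cspectrum_selfadjoint:
  fixes h :: "'a::cstar_algebra_1"
  assumes "cstar h = h" and "z \<in> cspectrum h"
  shows "Im z = 0"
proof (rule ccontr)
  assume "Im z \<noteq> 0"
  define t where "t = ((norm h)\<^sup>2 + 1) / (2 * Im z)"
  have shift: "(h + scaleC (\<i> * of_real t) 1) - scaleC (z + \<i> * of_real t) 1 = h - scaleC z 1"
    by (simp add: scaleC_add_left)
  have "z + \<i> * of_real t \<in> cspectrum (h + scaleC (\<i> * of_real t) 1)"
    using assms(2) unfolding cspectrum_def mem_Collect_eq shift .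
  then have "(cmod (z + \<i> * of_real t))\<^sup>2 \<le> (norm (h + scaleC (\<i> * of_real t) 1))\<^sup>2"
    by (simp add: norm_le_of_mem_cspectrum power_mono)
  also have "\<dots> \<le> (norm h)\<^sup>2 + t\<^sup>2"
    by (rule norm_selfadjoint_plus_imaginary[OF assms(1)])
  finally have "(Re z)\<^sup>2 + (Im z + t)\<^sup>2 \<le> (norm h)\<^sup>2 + t\<^sup>2"
    by (simp add: cmod_power2)
  then have "(Re z)\<^sup>2 + (Im z)\<^sup>2 + 2 * Im z * t \<le> (norm h)\<^sup>2"
    by (simp add: power2_eq_square algebra_simps)
  moreover have "2 * Im z * t = (norm h)\<^sup>2 + 1" using \<open>Im z \<noteq> 0\<close> by (simp add: t_def)
  moreover have "0 \<le> (Re z)\<^sup>2 + (Im z)\<^sup>2" by simp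
  ultimately show False by linarith
qed

text \<open>\<open>b\<^sup>2 - z = (b - m)(b + m)\<close> with \<open>m = \<surd>z\<close>, and \<open>m\<close> is non-real unless \<open>z \<ge> 0\<close>.\<close>

lemma positive_square_selfadjoint:
  fixes b :: "'a::cstar_algebra_1"
  assumes "cstar b = b"
  shows "positive (b * b)"
  unfolding positive_def
proof (rule conjI[OF _ ballI])
  show "cstar (b * b) = b * b" by (simp add: cstar_mult assms)
next
  fix z assume z: "z \<in> cspectrum (b * b)"
  show "Im z = 0 \<and> 0 \<le> Re z"
  proof (rule ccontr)
    assume not_nonneg: "\<not> (Im z = 0 \<and> 0 \<le> Re z)"
    define m where "m = csqrt z"
    have mm: "m * m = z" by (simp add: m_def power2_eq_square[symmetric])
    have "Im m \<noteq> 0"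
      using not_nonneg mm by (auto simp: power2_eq_square[symmetric])
    then have "invertible_elem (b - scaleC m 1)" "invertible_elem (b - scaleC (-m) 1)"
      using Im_eq_0_of_mem_cspectrum_selfadjoint[OF assms, of m]
        Im_eq_0_of_mem_cspectrum_selfadjoint[OF assms, of "-m"]
      unfolding cspectrum_def by auto
    moreover have "(b - scaleC m 1) * (b - scaleC (-m) 1) = b * b - scaleC z 1"
      by (simp add: left_diff_distrib right_diff_distrib scaleC_one_mult mult_scaleC_one
          scaleC_scaleC scaleC_minus_left scaleC_add_right scaleC_diff_right distrib_left mm[symmetric])
    ultimately have "invertible_elem (b * b - scaleC z 1)" by (metis invertible_elem_mult)
    then show False using z unfolding cspectrum_def by simp
  qed
qed

lemma positive_square_mult_cstar: "positive ((z * cstar z) * (z * cstar z))"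
  by (rule positive_square_selfadjoint) (simp add: cstar_mult cstar_cstar)

lemma square_mult_cstar_eq_0_iff:
  fixes z :: "'a::cstar_algebra_1"
  shows "(z * cstar z) * (z * cstar z) = 0 \<longleftrightarrow> z = 0"
proof -
  have "cstar (z * cstar z) = z * cstar z" by (simp add: cstar_mult cstar_cstar)
  then have "norm ((z * cstar z) * (z * cstar z)) = (norm (cstar z)) ^ 4"
    using cstar_identity[of "z * cstar z"] cstar_identity[of "cstar z"]
    by (simp add: cstar_cstar)
  then show ?thesis
    by (metis cstar_eq_0_iff norm_eq_zero power_eq_0_iff zero_less_numeral)
qed

lemma mult_mult_mem_hered: "x * a * x \<in> hered x"
  unfolding hered_def by (rule subsetD[OF closure_subset]) blast

lemma closed_ideal_annihilator: "closed_ideal {b. \<forall>c. x * c * b = 0}"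
  unfolding closed_ideal_def
proof (intro conjI ballI allI)
  have "{b. \<forall>c. x * c * b = 0} = (\<Inter>c. {b. x * c * b = 0})" by blast
  then show "closed {b. \<forall>c. x * c * b = 0}"
    by (simp add: closed_INT closed_Collect_eq continuous_intros)
next
  fix u e assume "u \<in> {b. \<forall>c. x * c * b = 0}"
  then have u: "x * c * u = 0" for c by blast
  show "e * u \<in> {b. \<forall>c. x * c * b = 0}" using u[of "_ * e"] by (simp add: mult.assoc)
  show "u * e \<in> {b. \<forall>c. x * c * b = 0}" using u by (simp flip: mult.assoc)
qed (simp_all add: distrib_left mult_scaleC_right)

lemma simple_alg_mult_ne_zero:
  fixes x a :: "'a::cstar_algebra_1"
  assumes "simple_alg TYPE('a)" "x \<noteq> 0" "a \<noteq> 0"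
  obtains c where "x * c * a \<noteq> 0"
proof -
  have "{b. \<forall>c. x * c * b = 0} = {0} \<or> {b. \<forall>c. x * c * b = (0::'a)} = UNIV"
    using assms(1) closed_ideal_annihilator unfolding simple_alg_def by blast
  moreover have "x * 1 * 1 \<noteq> 0" using assms(2) by simp
  then have "1 \<notin> {b. \<forall>c. x * c * b = 0}" by blast
  ultimately show ?thesis using assms(3) that by blast
qed

lemma cuntz_le_invertible_factor:
  fixes u y :: "'a::cstar_algebra_1"
  assumes "invertible_elem u" and "cuntz_le u y"
  obtains p q where "p * y * q = 1"
proof -
  obtain g where g: "u * g = 1" "g * u = 1" using assms(1) unfolding invertible_elem_def by blast
  have gpos: "0 < norm g + 1" using norm_ge_zero[of g] by linarith
  obtain v where "(\<lambda>n. norm (u - v n * y * cstar (v n))) \<longlonglongrightarrow> 0"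
    using assms(2) unfolding cuntz_le_def by blast
  moreover have "0 < 1 / (norm g + 1)" using gpos by simp
  ultimately have "\<forall>\<^sub>F n in sequentially. norm (u - v n * y * cstar (v n)) < 1 / (norm g + 1)"
    by (rule order_tendstoD(2))
  then obtain n where n: "norm (u - v n * y * cstar (v n)) < 1 / (norm g + 1)"
    unfolding eventually_sequentially by blast
  have "norm g * norm (u - v n * y * cstar (v n)) \<le> norm g * (1 / (norm g + 1))"
    using n by (intro mult_left_mono) auto
  also have "\<dots> < 1" using gpos by (simp add: divide_less_eq)
  finally obtain s where "s * (v n * y * cstar (v n)) = 1"
    using invertible_elem_near_invertible[OF g] unfolding invertible_elem_def by blast
  then show ?thesis using that[of "s * v n" "cstar (v n)"] by (simp add: mult.assoc)
qed

lemma norm_ge_1_of_cuntz_le: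
  fixes f y :: "'a::cstar_algebra_1"
  assumes "\<And>p q. p * y * q \<noteq> 1" and "cuntz_le (1 - f) y"
  shows "1 \<le> norm f"
proof (rule ccontr)
  assume "\<not> 1 \<le> norm f"
  then have "invertible_elem (1 - f)" by (simp add: invertible_elem_one_minus)
  then obtain p q where "p * y * q = 1" by (rule cuntz_le_invertible_factor[OF _ assms(2)])
  with assms(1) show False by blast
qed

theorem lemma3p3:
  fixes x :: "'a::cstar_algebra_1"
  assumes "simple_alg TYPE('a)"
    and "\<not> finite_dim_alg TYPE('a)"
    and "\<not> purely_infinite TYPE('a)"
    and "positive x" and "x \<noteq> 0"
  shows "\<forall>\<epsilon>>0. \<exists>y\<in>hered x. positive y \<and> y \<noteq> 0 \<and>
           (\<forall>f. positive f \<and> positive (1 - f) \<and> cuntz_le (1 - f) y \<longrightarrow> norm f > 1 - \<epsilon>)"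
proof -
  obtain a :: 'a where "a \<noteq> 0" and not_full: "\<And>u w. u * a * w \<noteq> 1"
    using assms(2,3) unfolding purely_infinite_def by blast
  obtain c where "x * c * a \<noteq> 0" using simple_alg_mult_ne_zero[OF assms(1,5) \<open>a \<noteq> 0\<close>] .
  define z where "z = x * c * a"
  define y where "y = (z * cstar z) * (z * cstar z)"
  have "cstar z = cstar a * cstar c * x"
    using assms(4) by (simp add: z_def cstar_mult positive_def mult.assoc)
  then have y_sandwich: "y = x * (c * a * cstar a * cstar c * x * x * c * a * cstar a * cstar c) * x"
    and y_factor: "y = x * c * a * (cstar a * cstar c * x * z * cstar z)"
    by (simp_all add: y_def z_def mult.assoc)
  have y_not_factor: "p * y * q \<noteq> 1" for p q
    using not_full[of "p * x * c" "cstar a * cstar c * x * z * cstar z * q"]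
    by (simp add: y_factor mult.assoc)
  have "y \<in> hered x" by (simp add: y_sandwich mult_mult_mem_hered)
  moreover have "positive y" "y \<noteq> 0"
    using \<open>x * c * a \<noteq> 0\<close>
    by (simp_all add: y_def z_def positive_square_mult_cstar square_mult_cstar_eq_0_iff)
  moreover have "1 - \<epsilon> < norm f" if "\<epsilon> > 0" "cuntz_le (1 - f) y" for \<epsilon> f
    using norm_ge_1_of_cuntz_le[OF y_not_factor that(2)] that(1) by linarith
  ultimately show ?thesis by blast
qed

end
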